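(* For all positive integers $k,t_1,\dots,t_k$ and all real $b,c>1$, $$\prod_{j=1}^k\left(\sum_{p_j=1}^{t_j}\binom{t_j-1}{p_j-1}b^{t_j-p_j}(ct_j)^{cp_j}\right)\le\big(c(t_1+\cdots+t_k)+b\big)^{c(t_1+\cdots+t_k)}.$$ *)

theory Defs
  imports Complex_Main
begin

end

theory Submission
  imports Defs
begin

text \<open>With \<open>X = (c t\<^sub>j) powr c\<close>, the \<open>j\<close>-th factor is the binomial expansion of
  \<open>X (X + b)^(t\<^sub>j - 1)\<close>. Since \<open>powr c\<close> is superadditive for \<open>c \<ge> 1\<close> and \<open>b \<le> b powr c\<close>,
  both \<open>X\<close> and \<open>X + b\<close> are at most \<open>(c t\<^sub>j + b) powr c\<close>, so the factor is at most
  \<open>(c t\<^sub>j + b) powr (c t\<^sub>j)\<close>. Enlarging every base to \<open>c (t\<^sub>1 + \<dots> + t\<^sub>k) + b\<close> and adding the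
  exponents gives the claim.\<close>

lemma add_powr_le_powr_add:
  fixes x y c :: real
  assumes "x \<ge> 0" "y \<ge> 0" "c \<ge> 1"
  shows "x powr c + y powr c \<le> (x + y) powr c"
proof (cases "x + y = 0")
  case True
  with assms have "x = 0" "y = 0" by linarith+
  then show ?thesis by simp
next
  case False
  define s where "s = x + y"
  have "s > 0" using False assms by (simp add: s_def)
  have frac: "(u / s) powr c \<le> u / s" if "0 \<le> u" "u \<le> s" for u
    using powr_mono'[of 1 c "u / s"] that \<open>s > 0\<close> assms(3) by simp
  have "x powr c + y powr c = ((x / s) powr c + (y / s) powr c) * s powr c"
    using \<open>s > 0\<close> by (simp add: powr_divide distrib_right)
  also have "\<dots> \<le> (x / s + y / s) * s powr c"
    using frac[of x] frac[of y] assms by (intro mult_right_mono add_mono) (auto simp: s_def)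
  also have "\<dots> = s powr c"
    using \<open>s > 0\<close> by (simp add: add_divide_distrib[symmetric] s_def)
  finally show ?thesis by (simp add: s_def)
qed

lemma sum_shifted_binomial:
  fixes x y :: "'a::comm_semiring_1"
  assumes "t \<ge> 1"
  shows "(\<Sum>p=1..t. of_nat ((t - 1) choose (p - 1)) * y ^ (t - p) * x ^ p)
           = x * (x + y) ^ (t - 1)"
proof -
  obtain n where t: "t = Suc n" using assms by (cases t) auto
  have "(\<Sum>p=1..t. of_nat ((t - 1) choose (p - 1)) * y ^ (t - p) * x ^ p)
          = (\<Sum>q=0..n. of_nat (n choose q) * y ^ (n - q) * x ^ Suc q)"
    unfolding t One_nat_def by (subst sum.shift_bounds_cl_Suc_ivl) simp
  also have "\<dots> = x * (\<Sum>q\<le>n. of_nat (n choose q) * x ^ q * y ^ (n - q))"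
    by (simp add: sum_distrib_left atLeast0AtMost algebra_simps)
  also have "\<dots> = x * (x + y) ^ (t - 1)"
    by (simp add: binomial_ring t)
  finally show ?thesis .
qed

lemma binomial_powr_sum_le:
  fixes b c :: real and t :: nat
  assumes "t \<ge> 1" "b \<ge> 1" "c \<ge> 1"
  shows "(\<Sum>p=1..t. real ((t - 1) choose (p - 1)) * b ^ (t - p) * (c * real t) powr (c * real p))
           \<le> (c * real t + b) powr (c * real t)"
proof -
  define X where "X = (c * real t) powr c"
  define Y where "Y = (c * real t + b) powr c"
  have "c * real t > 0" using assms by simp
  then have "X > 0" using assms by (simp add: X_def)
  have power_X: "(c * real t) powr (c * real p) = X ^ p" for p
    using \<open>X > 0\<close> by (simp add: X_def powr_powr powr_realpow[symmetric] mult.commute)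
  have "X \<le> Y"
    unfolding X_def Y_def using assms \<open>c * real t > 0\<close> by (intro powr_mono2) auto
  have "X + b \<le> X + b powr c"
    using powr_mono[of 1 c b] assms by simp
  also have "\<dots> \<le> Y"
    unfolding X_def Y_def using assms \<open>c * real t > 0\<close> by (intro add_powr_le_powr_add) auto
  finally have "X + b \<le> Y" .
  have "(\<Sum>p=1..t. real ((t - 1) choose (p - 1)) * b ^ (t - p) * (c * real t) powr (c * real p))
          = X * (X + b) ^ (t - 1)"
    unfolding power_X using assms(1) by (rule sum_shifted_binomial)
  also have "\<dots> \<le> Y * Y ^ (t - 1)"
    using \<open>X \<le> Y\<close> \<open>X + b \<le> Y\<close> \<open>X > 0\<close> assms(2)
    by (intro mult_mono power_mono) auto
  also have "\<dots> = Y ^ t"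
    using assms(1) by (cases t) simp_all
  also have "\<dots> = (c * real t + b) powr (c * real t)"
  proof -
    have "c * real t + b \<noteq> 0" using \<open>c * real t > 0\<close> assms(2) by linarith
    then show ?thesis by (simp add: Y_def powr_power mult.commute)
  qed
  finally show ?thesis .
qed

lemma prod_powr_le_powr_sum:
  fixes x e :: "'a \<Rightarrow> real"
  assumes "y > 0" "\<And>j. j \<in> A \<Longrightarrow> 0 \<le> x j \<and> x j \<le> y" "\<And>j. j \<in> A \<Longrightarrow> e j \<ge> 0"
  shows "(\<Prod>j\<in>A. x j powr e j) \<le> y powr (\<Sum>j\<in>A. e j)"
proof -
  have "(\<Prod>j\<in>A. x j powr e j) \<le> (\<Prod>j\<in>A. y powr e j)"
    using assms by (intro prod_mono) (auto intro: powr_mono2)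
  also have "\<dots> = y powr (\<Sum>j\<in>A. e j)"
    using assms(1) by (simp add: powr_sum)
  finally show ?thesis .
qed

theorem lemma4p8:
  fixes k :: nat and t :: "nat \<Rightarrow> nat" and b c :: real
  assumes "k \<ge> 1"
    and "\<And>j. j \<in> {1..k} \<Longrightarrow> t j \<ge> 1"
    and "b > 1" and "c > 1"
  shows "(\<Prod>j=1..k. \<Sum>p=1..t j. real ((t j - 1) choose (p - 1)) * b ^ (t j - p)
            * (c * real (t j)) powr (c * real p))
         \<le> (c * real (\<Sum>j=1..k. t j) + b) powr (c * real (\<Sum>j=1..k. t j))"
proof -
  let ?T = "\<Sum>j=1..k. t j"
  have "0 < c * real ?T + b" using assms by (intro add_nonneg_pos) (simp_all del: of_nat_sum)
  have "(\<Prod>j=1..k. \<Sum>p=1..t j. real ((t j - 1) choose (p - 1)) * b ^ (t j - p)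
            * (c * real (t j)) powr (c * real p))
        \<le> (\<Prod>j=1..k. (c * real (t j) + b) powr (c * real (t j)))"
    using assms by (intro prod_mono conjI sum_nonneg binomial_powr_sum_le) auto
  also have "\<dots> \<le> (c * real ?T + b) powr (\<Sum>j=1..k. c * real (t j))"
  proof (rule prod_powr_le_powr_sum)
    fix j assume "j \<in> {1..k}"
    then have "t j \<le> ?T" by (intro member_le_sum) auto
    with assms show "0 \<le> c * real (t j) + b \<and> c * real (t j) + b \<le> c * real ?T + b"
      by (simp del: of_nat_sum)
  qed (use assms \<open>0 < c * real ?T + b\<close> in auto)
  also have "\<dots> = (c * real ?T + b) powr (c * real ?T)"
    by (simp add: sum_distrib_left)
  finally show ?thesis .
qed

end
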